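(* Let $(\mathcal{M},d)$ be a bounded, separable unique geodesic space, and suppose that for every pair $\alpha,\beta\in\mathcal{M}$ a geodesic transport map $\Gamma_{\alpha,\beta}:\mathcal{M}\to\mathcal{M}$ is given, i.e. a map assigning to each $\omega\in\mathcal{M}$ a unique point $\Gamma_{\alpha,\beta}(\omega)\in\mathcal{M}$. Let $(Y_0,Y_1,D)$ be random, with $D\in\{0,1\}$, potential outcomes $Y_t(0),Y_t(1)\in\mathcal{M}$ for $t\in\{0,1\}$, and observed outcomes $Y_0=Y_0(0)$ and $Y_1=DY_1(1)+(1-D)Y_1(0)$ (i.e. $Y_1=Y_1(1)$ if $D=1$ and $Y_1=Y_1(0)$ if $D=0$). For $d,t\in\{0,1\}$ and $a\in\{0,1\}$ put $\nu_{d,t}(a)=E_\oplus(Y_t(a)\mid D=d)$ and $\nu_{d,t}=E_\oplus(Y_t\mid D=d)$, and define the geodesic average treatment effect on the treated (GATT) as the geodesic $\tau=\gamma_{\nu_{1,1}(0),\nu_{1,1}(1)}$. Assume the parallel trends condition \[\Gamma_{\nu_{0,0}(0),\nu_{0,1}(0)}(\nu_{1,0}(0))=\nu_{1,1}(0).\] Then \[\tau=\ominus\gamma_{\nu_{0,0},\nu_{0,1}}\oplus\gamma_{\nu_{1,0},\nu_{1,1}}=\gamma_{\nu_{1,1}',\nu_{1,1}},\qquad\text{where } \nu_{1,1}'=\Gamma_{\nu_{0,0},\nu_{0,1}}(\nu_{1,0}).\]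
   Context: A unique geodesic space is a metric space in which any two points $\alpha,\beta$ are joined by exactly one geodesic $\gamma_{\alpha,\beta}:[0,1]\to\mathcal{M}$, i.e. a constant-speed curve with $\gamma_{\alpha,\beta}(0)=\alpha$, $\gamma_{\alpha,\beta}(1)=\beta$ whose length equals $d(\alpha,\beta)$. For a random object $Y$ in $\mathcal{M}$ and an event/variable $X$, the conditional Fréchet mean is $E_\oplus(Y\mid X)=\operatorname{argmin}_{\omega\in\mathcal{M}}E\{d^2(Y,\omega)\mid X\}$; all Fréchet means appearing are assumed to exist and be unique. For $\alpha,\beta,\omega,\zeta\in\mathcal{M}$, the difference of geodesics is defined as $\ominus\gamma_{\alpha,\beta}\oplus\gamma_{\omega,\zeta}:=\gamma_{\zeta',\zeta}$ with $\zeta'=\Gamma_{\alpha,\beta}(\omega)$. *)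

theory Defs
  imports "HOL-Probability.Probability" "HOL-Library.FuncSet"
begin

text \<open>A geodesic from a to b: a constant-speed curve [0,1] -> M of length dist a b,
  represented as an extensional function on {0..1} (value undefined outside).\<close>
definition is_geodesic :: "'m::metric_space \<Rightarrow> 'm \<Rightarrow> (real \<Rightarrow> 'm) \<Rightarrow> bool" where
  "is_geodesic a b g \<longleftrightarrow> g \<in> extensional {0..1} \<and> g 0 = a \<and> g 1 = b \<and>
     (\<forall>s\<in>{0..1}. \<forall>t\<in>{0..1}. dist (g s) (g t) = \<bar>s - t\<bar> * dist a b)"

definition unique_geodesic_space :: "'m::metric_space itself \<Rightarrow> bool" where
  "unique_geodesic_space _ \<longleftrightarrow> (\<forall>a b :: 'm. \<exists>!g. is_geodesic a b g)"

definition geod :: "'m::metric_space \<Rightarrow> 'm \<Rightarrow> real \<Rightarrow> 'm" where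
  "geod a b = (THE g. is_geodesic a b g)"

text \<open>Difference of geodesics: (-gamma_{a,b}) (+) gamma_{w,z} := gamma_{Gamma_{a,b}(w), z}.\<close>
definition geod_diff :: "('m \<Rightarrow> 'm \<Rightarrow> 'm \<Rightarrow> 'm) \<Rightarrow> 'm::metric_space \<Rightarrow> 'm \<Rightarrow> 'm \<Rightarrow> 'm \<Rightarrow> real \<Rightarrow> 'm" where
  "geod_diff \<Gamma> a b w z = geod (\<Gamma> a b w) z"

definition cond_exp_event :: "'w measure \<Rightarrow> ('w \<Rightarrow> real) \<Rightarrow> 'w set \<Rightarrow> real" where
  "cond_exp_event M f A = (\<integral>x. indicator A x * f x \<partial>M) / measure M A"

definition is_cond_frechet_mean :: "'w measure \<Rightarrow> ('w \<Rightarrow> 'm::metric_space) \<Rightarrow> 'w set \<Rightarrow> 'm \<Rightarrow> bool" where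
  "is_cond_frechet_mean M Y A w \<longleftrightarrow>
     (\<forall>w'. cond_exp_event M (\<lambda>x. (dist (Y x) w)\<^sup>2) A \<le> cond_exp_event M (\<lambda>x. (dist (Y x) w')\<^sup>2) A)"

definition cond_frechet_mean :: "'w measure \<Rightarrow> ('w \<Rightarrow> 'm::metric_space) \<Rightarrow> 'w set \<Rightarrow> 'm" where
  "cond_frechet_mean M Y A = (THE w. is_cond_frechet_mean M Y A w)"

end

theory Submission
  imports Defs
begin

text \<open>A conditional Frechet mean given an event only sees the outcome on that event. On
  \<open>{D = d}\<close> the observed outcome \<open>Y 0\<close> is \<open>Y\<^sub>0(0)\<close> and \<open>Y 1\<close> is \<open>Y\<^sub>1(d)\<close>, so the
  observed means are the corresponding potential ones, and parallel trends turns the transported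
  starting point into \<open>\<nu>\<^sub>1\<^sub>,\<^sub>1(0)\<close>. Since the means are definite descriptions, the geometric
  hypotheses and the existence of the means are not needed for the identity.\<close>

lemma cond_exp_event_cong:
  assumes "\<And>x. x \<in> space M \<Longrightarrow> x \<in> A \<Longrightarrow> f x = g x"
  shows "cond_exp_event M f A = cond_exp_event M g A"
  unfolding cond_exp_event_def
  by (intro arg_cong2[where f="(/)"] refl Bochner_Integration.integral_cong)
     (auto simp: indicator_def assms)

lemma cond_frechet_mean_cong:
  assumes "\<And>x. x \<in> space M \<Longrightarrow> x \<in> A \<Longrightarrow> Y x = Z x"
  shows "cond_frechet_mean M Y A = cond_frechet_mean M Z A"
proof -
  have "is_cond_frechet_mean M Y A = is_cond_frechet_mean M Z A"
    unfolding is_cond_frechet_mean_def using assms by (simp cong: cond_exp_event_cong)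
  then show ?thesis
    unfolding cond_frechet_mean_def by simp
qed

theorem theorem3p1:
  fixes P :: "'w measure"
    and \<Gamma> :: "'m::metric_space \<Rightarrow> 'm \<Rightarrow> 'm \<Rightarrow> 'm"
    and Yp :: "nat \<Rightarrow> nat \<Rightarrow> 'w \<Rightarrow> 'm"   (* Yp t a = potential outcome Y_t(a) *)
    and Y :: "nat \<Rightarrow> 'w \<Rightarrow> 'm"            (* Y t = observed outcome Y_t *)
    and D :: "'w \<Rightarrow> nat"
  assumes ugs: "unique_geodesic_space TYPE('m)"
    and bdd: "bounded (UNIV :: 'm set)"
    and sep: "\<exists>S :: 'm set. countable S \<and> closure S = UNIV"
    and ps: "prob_space P"
    and D_meas: "D \<in> measurable P (count_space UNIV)"
    and D_01: "\<And>x. x \<in> space P \<Longrightarrow> D x \<in> {0, 1}"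
    and Yp_meas: "\<And>t a. t \<in> {0, 1} \<Longrightarrow> a \<in> {0, 1} \<Longrightarrow> Yp t a \<in> borel_measurable P"
    and Y0: "\<And>x. x \<in> space P \<Longrightarrow> Y 0 x = Yp 0 0 x"
    and Y1: "\<And>x. x \<in> space P \<Longrightarrow> Y 1 x = (if D x = 1 then Yp 1 1 x else Yp 1 0 x)"
    and pos: "\<And>d. d \<in> {0, 1} \<Longrightarrow> measure P {x \<in> space P. D x = d} > 0"
    and ex_pot: "\<And>d t a. d \<in> {0, 1} \<Longrightarrow> t \<in> {0, 1} \<Longrightarrow> a \<in> {0, 1} \<Longrightarrow>
        \<exists>!w. is_cond_frechet_mean P (Yp t a) {x \<in> space P. D x = d} w"
    and ex_obs: "\<And>d t. d \<in> {0, 1} \<Longrightarrow> t \<in> {0, 1} \<Longrightarrow>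
        \<exists>!w. is_cond_frechet_mean P (Y t) {x \<in> space P. D x = d} w"
    and parallel_trends:
      "\<Gamma> (cond_frechet_mean P (Yp 0 0) {x \<in> space P. D x = 0})
         (cond_frechet_mean P (Yp 1 0) {x \<in> space P. D x = 0})
         (cond_frechet_mean P (Yp 0 0) {x \<in> space P. D x = 1})
       = cond_frechet_mean P (Yp 1 0) {x \<in> space P. D x = 1}"
  shows "geod (cond_frechet_mean P (Yp 1 0) {x \<in> space P. D x = 1})
              (cond_frechet_mean P (Yp 1 1) {x \<in> space P. D x = 1})
         = geod_diff \<Gamma> (cond_frechet_mean P (Y 0) {x \<in> space P. D x = 0})
              (cond_frechet_mean P (Y 1) {x \<in> space P. D x = 0})
              (cond_frechet_mean P (Y 0) {x \<in> space P. D x = 1})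
              (cond_frechet_mean P (Y 1) {x \<in> space P. D x = 1})
       \<and> geod_diff \<Gamma> (cond_frechet_mean P (Y 0) {x \<in> space P. D x = 0})
              (cond_frechet_mean P (Y 1) {x \<in> space P. D x = 0})
              (cond_frechet_mean P (Y 0) {x \<in> space P. D x = 1})
              (cond_frechet_mean P (Y 1) {x \<in> space P. D x = 1})
         = geod (\<Gamma> (cond_frechet_mean P (Y 0) {x \<in> space P. D x = 0})
                   (cond_frechet_mean P (Y 1) {x \<in> space P. D x = 0})
                   (cond_frechet_mean P (Y 0) {x \<in> space P. D x = 1}))
                (cond_frechet_mean P (Y 1) {x \<in> space P. D x = 1})"
proof -
  let ?E = "\<lambda>d. {x \<in> space P. D x = d}"
  have mean_Y0: "cond_frechet_mean P (Y 0) (?E d) = cond_frechet_mean P (Yp 0 0) (?E d)" for d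
    by (rule cond_frechet_mean_cong) (simp add: Y0)
  have mean_Y1_control: "cond_frechet_mean P (Y 1) (?E 0) = cond_frechet_mean P (Yp 1 0) (?E 0)"
    by (rule cond_frechet_mean_cong) (simp add: Y1 del: One_nat_def)
  have mean_Y1_treated: "cond_frechet_mean P (Y 1) (?E 1) = cond_frechet_mean P (Yp 1 1) (?E 1)"
    by (rule cond_frechet_mean_cong) (simp add: Y1 del: One_nat_def)
  show ?thesis
    unfolding geod_diff_def mean_Y0 mean_Y1_control mean_Y1_treated parallel_trends by simp
qed

end
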